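(* In the primal semi-discrete setting below, let $F(t)\in V^1$ be any flux depending continuously on $t$, let $Q=qF$ with $q$ the discrete potential vorticity, let $u,D$ satisfy (M) and (C) with these $F,Q$, and assume $D>0$ on $\Omega$ for all times. If $q(0)$ is a constant function $c$ on $\Omega$, then $q(t)=c$ for all times $t$.
   Context: Primal setting. Let $\Omega$ be a smooth closed (compact, without boundary) oriented two-dimensional Riemannian surface (e.g. the sphere) with area form $dS$ and unit normal $\hat k$. For a tangent vector field $u$ let $u^\perp=\hat k\times u$; $\nabla$ and $\nabla\cdot$ denote the surface gradient and divergence, and $\nabla^\perp\gamma=\hat k\times\nabla\gamma$. $\Omega$ is divided into a mesh of elements $e$ with edges. Let $V^0\subset H^1(\Omega)$ be a finite-dimensional space of continuous piecewise polynomial functions containing the constants; $V^1\subset H(\mathrm{div},\Omega)$ a finite-dimensional space of piecewise polynomial tangent vector fields with continuous normal components across element edges; $V^2\subset L^2(\Omega)$ a finite-dimensional space of (discontinuous) piecewise polynomial functions containing the indicator function $\mathbf 1_e$ of every element; and assume $\nabla^\perp V^0\subset V^1$ and $\nabla\cdot V^1\subset V^2$. Fix a constant $g>0$, a time-independent Coriolis parameter $f\in L^\infty(\Omega)$ and a bottom topography $b\in V^2$. The unknowns are $u(t)\in V^1$, $D(t)\in V^2$, continuously differentiable in $t$ on a time interval, coupled to a mass flux $F(t)\in V^1$ and a potential-vorticity flux $Q(t)$ (a square-integrable tangent vector field), specified case by case, via (M) $\frac{d}{dt}\int_\Omega w\cdot u\,dS+\int_\Omega w\cdot Q^\perp\,dS-\int_\Omega(\nabla\cdot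 w)\big(g(D+b)+\tfrac12|u|^2\big)dS=0$ for all $w\in V^1$; (C) $\frac{d}{dt}\int_\Omega\phi D\,dS+\int_\Omega\phi\,\nabla\cdot F\,dS=0$ for all $\phi\in V^2$. The discrete vorticity $\zeta(t)\in V^0$ is defined by $\int_\Omega\gamma\zeta\,dS=-\int_\Omega\nabla^\perp\gamma\cdot u\,dS$ for all $\gamma\in V^0$. When $D>0$, the discrete potential vorticity $q(t)\in V^0$ is defined by $\int_\Omega\gamma qD\,dS=\int_\Omega\gamma(\zeta+f)\,dS$ for all $\gamma\in V^0$. The energy-conserving mass flux is the $F(t)\in V^1$ with $\int_\Omega w\cdot F\,dS=\int_\Omega w\cdot(Du)\,dS$ for all $w\in V^1$. *)

theory Defs
  imports "HOL-Analysis.Analysis"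
begin

definition fd_span :: "('p \<Rightarrow> 'a::real_vector) set \<Rightarrow> ('p \<Rightarrow> 'a) set" where
  "fd_span B = {(\<lambda>x. \<Sum>b\<in>B. c b *\<^sub>R b x) | c. True}"

definition finite_dim_fun_space :: "('p \<Rightarrow> 'a::real_vector) set \<Rightarrow> bool" where
  "finite_dim_fun_space V \<longleftrightarrow> (\<exists>B. finite B \<and> V = fd_span B)"

definition perp :: "('p \<Rightarrow> real^3) \<Rightarrow> ('p \<Rightarrow> real^3) \<Rightarrow> ('p \<Rightarrow> real^3)" where
  "perp khat w = (\<lambda>x. cross3 (khat x) (w x))"

text \<open>Bounded Borel-measurable fields on the surface (piecewise polynomials are such).\<close>
definition bdd_meas :: "'p measure \<Rightarrow> ('p \<Rightarrow> 'a::{real_normed_vector, second_countable_topology}) \<Rightarrow> bool" where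
  "bdd_meas M h \<longleftrightarrow> h \<in> borel_measurable M \<and> bounded (range h)"

text \<open>The closed oriented surface Omega is the whole type 'p,
  a compact topological space carrying the (finite) area measure M, which charges
  every nonempty open set.  Tangent vectors at x are the vectors of R^3 orthogonal
  to the unit normal khat x.  grad (surface gradient) and sdiv (surface divergence)
  are the differential operators of the surface, of which we record the facts of
  surface calculus relevant to the discrete spaces: tangency of gradients,
  linearity, the Green formula on a closed surface and sdiv (grad-perp) = 0.
  E is the mesh: finitely many measurable elements covering Omega with
  pairwise null overlaps.\<close>
definition primal_setting ::
  "'p::topological_space measure \<Rightarrow> ('p \<Rightarrow> real^3) \<Rightarrow> 'p set set
   \<Rightarrow> (('p \<Rightarrow> real) \<Rightarrow> ('p \<Rightarrow> real^3)) \<Rightarrow> (('p \<Rightarrow> real^3) \<Rightarrow> ('p \<Rightarrow> real))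
   \<Rightarrow> ('p \<Rightarrow> real) set \<Rightarrow> ('p \<Rightarrow> real^3) set \<Rightarrow> ('p \<Rightarrow> real) set \<Rightarrow> bool" where
  "primal_setting M khat E grad sdiv V0 V1 V2 \<longleftrightarrow>
     \<comment> \<open>the surface and its area measure\<close>
     compact (UNIV :: 'p set) \<and> finite_measure M \<and> space M = UNIV \<and> sets M = sets borel \<and>
     (\<forall>U. open U \<and> U \<noteq> {} \<longrightarrow> emeasure M U > 0) \<and>
     \<comment> \<open>unit normal\<close>
     khat \<in> borel_measurable M \<and> (\<forall>x. norm (khat x) = 1) \<and>
     \<comment> \<open>mesh\<close>
     finite E \<and> (\<forall>e\<in>E. e \<in> sets M) \<and> \<Union>E = UNIV \<and>
     (\<forall>e\<in>E. \<forall>e'\<in>E. e \<noteq> e' \<longrightarrow> emeasure M (e \<inter> e') = 0) \<and>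
     \<comment> \<open>the discrete spaces\<close>
     finite_dim_fun_space V0 \<and> finite_dim_fun_space V1 \<and> finite_dim_fun_space V2 \<and>
     (\<forall>\<gamma>\<in>V0. continuous_on UNIV \<gamma> \<and> bdd_meas M \<gamma>) \<and>
     (\<forall>w\<in>V1. bdd_meas M w \<and> (\<forall>x. w x \<bullet> khat x = 0)) \<and>
     (\<forall>\<phi>\<in>V2. bdd_meas M \<phi>) \<and>
     (\<forall>c::real. (\<lambda>_. c) \<in> V0) \<and>
     (\<forall>e\<in>E. indicator e \<in> V2) \<and>
     (\<forall>\<gamma>\<in>V0. perp khat (grad \<gamma>) \<in> V1) \<and>
     (\<forall>w\<in>V1. sdiv w \<in> V2) \<and>
     \<comment> \<open>surface calculus\<close>
     (\<forall>\<gamma>\<in>V0. \<forall>x. grad \<gamma> x \<bullet> khat x = 0) \<and>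
     (\<forall>\<gamma>1\<in>V0. \<forall>\<gamma>2\<in>V0. \<forall>a b.
        grad (\<lambda>x. a * \<gamma>1 x + b * \<gamma>2 x) = (\<lambda>x. a *\<^sub>R grad \<gamma>1 x + b *\<^sub>R grad \<gamma>2 x)) \<and>
     (\<forall>w1\<in>V1. \<forall>w2\<in>V1. \<forall>a b.
        sdiv (\<lambda>x. a *\<^sub>R w1 x + b *\<^sub>R w2 x) = (\<lambda>x. a * sdiv w1 x + b * sdiv w2 x)) \<and>
     (\<forall>\<gamma>\<in>V0. \<forall>w\<in>V1. (LINT x|M. \<gamma> x * sdiv w x) = - (LINT x|M. grad \<gamma> x \<bullet> w x)) \<and>
     (\<forall>\<gamma>\<in>V0. AE x in M. sdiv (perp khat (grad \<gamma>)) x = 0)"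

text \<open>Continuous differentiability in time of a V-valued trajectory, tested
  against the finite-dimensional space (equivalent to C^1 of the coefficients).\<close>
definition weak_C1 :: "'p measure \<Rightarrow> real set \<Rightarrow> ('p \<Rightarrow> 'a::{real_inner, second_countable_topology}) set
    \<Rightarrow> (real \<Rightarrow> 'p \<Rightarrow> 'a) \<Rightarrow> bool" where
  "weak_C1 M I V u \<longleftrightarrow> (\<forall>w\<in>V. \<exists>d. continuous_on I d \<and>
      (\<forall>t\<in>I. ((\<lambda>s. LINT x|M. w x \<bullet> u s x) has_real_derivative d t) (at t within I)))"

definition weak_cont :: "'p measure \<Rightarrow> real set \<Rightarrow> ('p \<Rightarrow> 'a::{real_inner, second_countable_topology}) set
    \<Rightarrow> (real \<Rightarrow> 'p \<Rightarrow> 'a) \<Rightarrow> bool" where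
  "weak_cont M I V u \<longleftrightarrow> (\<forall>w\<in>V. continuous_on I (\<lambda>s. LINT x|M. w x \<bullet> u s x))"

end

theory Submission
  imports Defs
begin

text \<open>Let r = q - c. Testing the momentum equation with rotated gradients (which are
  divergence free) and the continuity equation with the V2-projection of a test function
  \<gamma> \<in> V0 gives the discrete conservation law d/dt \<integral>\<gamma> r D = \<integral> r (\<nabla>\<gamma> \<cdot> F).
  In a basis (\<gamma>_j) of V0 the moments m_j = \<integral>\<gamma>_j r D depend injectively on the
  coefficients of r, because D > 0 makes the D-weighted mass matrix definite; by continuity
  and compactness this holds uniformly on compact time intervals, where the fluxes are also
  bounded. Hence E = \<Sigma> m_j^2 satisfies |E'| \<le> L E, and since E(0) = 0, Gronwall's
  inequality forces E = 0, i.e. q = c, for all times.\<close>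

section \<open>Cross products and bounded measurable fields\<close>

lemma inner_cross3_cross3:
  fixes k a b :: "real^3"
  shows "cross3 k a \<bullet> cross3 k b = (k \<bullet> k) * (a \<bullet> b) - (k \<bullet> a) * (k \<bullet> b)"
  by (simp add: cross3_def inner_vec_def sum_3 vector_def) (simp add: algebra_simps)

lemma cross3_cross3_self:
  fixes k a :: "real^3"
  shows "cross3 (cross3 k a) k = (k \<bullet> k) *\<^sub>R a - (a \<bullet> k) *\<^sub>R k"
  by (simp add: cross3_def inner_vec_def sum_3 vector_def vec_eq_iff forall_3) (simp add: algebra_simps)

lemma bdd_meas_iff: "bdd_meas M h \<longleftrightarrow> h \<in> borel_measurable M \<and> (\<exists>B. \<forall>x. norm (h x) \<le> B)"
  unfolding bdd_meas_def bounded_iff by auto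

lemma bdd_meas_const: "bdd_meas M (\<lambda>x. c)"
  unfolding bdd_meas_iff by auto

lemma bdd_meas_bilinear:
  fixes f :: "'p \<Rightarrow> 'a::{real_normed_vector,second_countable_topology}"
    and g :: "'p \<Rightarrow> 'b::{real_normed_vector,second_countable_topology}"
    and prod :: "'a \<Rightarrow> 'b \<Rightarrow> 'c::{real_normed_vector,second_countable_topology}"
  assumes prod: "bounded_bilinear prod" and "bdd_meas M f" "bdd_meas M g"
  shows "bdd_meas M (\<lambda>x. prod (f x) (g x))"
proof -
  obtain A B where f: "f \<in> borel_measurable M" "\<And>x. norm (f x) \<le> A"
    and g: "g \<in> borel_measurable M" "\<And>x. norm (g x) \<le> B"
    using assms(2,3) unfolding bdd_meas_iff by blast
  obtain K where "K > 0" and K: "\<And>a b. norm (prod a b) \<le> norm a * norm b * K"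
    using bounded_bilinear.pos_bounded[OF prod] by blast
  have "continuous_on UNIV (\<lambda>z. prod (fst z) (snd z))"
    by (intro bounded_bilinear.continuous_on[OF prod] continuous_on_fst continuous_on_snd continuous_on_id)
  then have "(\<lambda>x. prod (f x) (g x)) \<in> borel_measurable M"
    using f(1) g(1) by (rule borel_measurable_continuous_Pair[rotated 2])
  moreover have "norm (prod (f x) (g x)) \<le> A * B * K" for x
  proof -
    have "norm (f x) * norm (g x) \<le> A * B"
      using f(2)[of x] g(2)[of x] by (intro mult_mono) (auto intro: order.trans[OF norm_ge_zero])
    then show ?thesis using K[of "f x" "g x"] \<open>K > 0\<close> by (meson mult_right_mono less_imp_le order.trans)
  qed
  ultimately show ?thesis unfolding bdd_meas_iff by blast
qed

lemmas bdd_meas_mult = bdd_meas_bilinear[OF bounded_bilinear_mult]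
lemmas bdd_meas_scaleR = bdd_meas_bilinear[OF bounded_bilinear_scaleR]
lemmas bdd_meas_inner = bdd_meas_bilinear[OF bounded_bilinear_inner]
lemmas bdd_meas_cross3 = bdd_meas_bilinear[OF bilinear_cross[unfolded bilinear_conv_bounded_bilinear]]

lemma bdd_meas_add:
  fixes f g :: "'p \<Rightarrow> 'a::{real_normed_vector,second_countable_topology}"
  assumes "bdd_meas M f" "bdd_meas M g" shows "bdd_meas M (\<lambda>x. f x + g x)"
proof -
  obtain A B where "f \<in> borel_measurable M" "\<And>x. norm (f x) \<le> A"
    and "g \<in> borel_measurable M" "\<And>x. norm (g x) \<le> B"
    using assms unfolding bdd_meas_iff by blast
  then show ?thesis unfolding bdd_meas_iff
    by (intro conjI borel_measurable_add exI[of _ "A + B"] allI order.trans[OF norm_triangle_ineq add_mono])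
qed

lemma bdd_meas_diff:
  fixes f g :: "'p \<Rightarrow> 'a::{real_normed_vector,second_countable_topology}"
  assumes "bdd_meas M f" "bdd_meas M g" shows "bdd_meas M (\<lambda>x. f x - g x)"
  using bdd_meas_add[OF assms(1) bdd_meas_scaleR[OF bdd_meas_const assms(2), of "-1"]] by simp

lemma bdd_meas_sum:
  fixes f :: "'i \<Rightarrow> 'p \<Rightarrow> 'a::{real_normed_vector,second_countable_topology}"
  assumes "finite S" "\<And>i. i \<in> S \<Longrightarrow> bdd_meas M (f i)" shows "bdd_meas M (\<lambda>x. \<Sum>i\<in>S. f i x)"
  using assms by (induction S rule: finite_induct) (auto intro: bdd_meas_const bdd_meas_add)

section \<open>Finite spans\<close>

lemma fd_spanI: "f = (\<lambda>x. \<Sum>b\<in>B. c b *\<^sub>R b x) \<Longrightarrow> f \<in> fd_span B"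
  unfolding fd_span_def by auto

lemma fd_spanE:
  assumes "f \<in> fd_span B" obtains c where "f = (\<lambda>x. \<Sum>b\<in>B. c b *\<^sub>R b x)"
  using assms unfolding fd_span_def by auto

lemma fd_span_lincomb:
  assumes "f \<in> fd_span B" "g \<in> fd_span B"
  shows "(\<lambda>x. a *\<^sub>R f x + b *\<^sub>R g x) \<in> fd_span B"
proof -
  obtain c d where "f = (\<lambda>x. \<Sum>v\<in>B. c v *\<^sub>R v x)" "g = (\<lambda>x. \<Sum>v\<in>B. d v *\<^sub>R v x)"
    using assms by (elim fd_spanE)
  then have "(\<lambda>x. a *\<^sub>R f x + b *\<^sub>R g x) = (\<lambda>x. \<Sum>v\<in>B. (a * c v + b * d v) *\<^sub>R v x)"
    by (simp add: scaleR_sum_right sum.distrib scaleR_add_left)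
  then show ?thesis by (rule fd_spanI)
qed

lemma fd_span_superset: "finite B \<Longrightarrow> v \<in> B \<Longrightarrow> v \<in> fd_span B"
  by (rule fd_spanI[where c = "\<lambda>w. if w = v then 1 else 0"])
    (simp add: if_distrib[of "\<lambda>t. t *\<^sub>R _"] cong: if_cong)

lemma fd_span_mono: "B \<subseteq> C \<Longrightarrow> finite C \<Longrightarrow> fd_span B \<subseteq> fd_span C"
proof
  fix f assume "B \<subseteq> C" "finite C" "f \<in> fd_span B"
  then obtain c where "f = (\<lambda>x. \<Sum>w\<in>B. c w *\<^sub>R w x)" by (elim fd_spanE)
  with \<open>B \<subseteq> C\<close> \<open>finite C\<close> have "f = (\<lambda>x. \<Sum>w\<in>C. (if w \<in> B then c w else 0) *\<^sub>R w x)"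
    by (simp add: if_distrib[of "\<lambda>t. t *\<^sub>R _"] sum.inter_restrict[symmetric] Int_absorb1 cong: if_cong)
  then show "f \<in> fd_span C" by (rule fd_spanI)
qed

lemma bdd_meas_fd_span:
  assumes "finite B" "\<And>b. b \<in> B \<Longrightarrow> bdd_meas M b" "f \<in> fd_span B"
  shows "bdd_meas M f"
proof -
  obtain c where "f = (\<lambda>x. \<Sum>b\<in>B. c b *\<^sub>R b x)" using assms(3) by (elim fd_spanE)
  then show ?thesis by (simp only:) (intro bdd_meas_sum bdd_meas_scaleR bdd_meas_const; use assms in blast)
qed

definition fd_independent :: "('p \<Rightarrow> 'a::real_vector) set \<Rightarrow> bool" where
  "fd_independent B \<longleftrightarrow> (\<forall>c. (\<lambda>x. \<Sum>b\<in>B. c b *\<^sub>R b x) = (\<lambda>x. 0) \<longrightarrow> (\<forall>b\<in>B. c b = 0))"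

lemma fd_span_remove_dependent:
  fixes B :: "('p \<Rightarrow> 'a::real_vector) set"
  assumes fin: "finite B" and k: "k \<in> B" "c k \<noteq> 0" and dep: "(\<lambda>x. \<Sum>b\<in>B. c b *\<^sub>R b x) = (\<lambda>x. 0)"
  shows "fd_span (B - {k}) = fd_span B"
proof
  show "fd_span (B - {k}) \<subseteq> fd_span B" using fin by (intro fd_span_mono) auto
next
  show "fd_span B \<subseteq> fd_span (B - {k})"
  proof
    fix f assume "f \<in> fd_span B"
    then obtain d where f: "f = (\<lambda>x. \<Sum>b\<in>B. d b *\<^sub>R b x)" by (elim fd_spanE)
    have split: "(\<Sum>b\<in>B. h b) = h k + (\<Sum>b\<in>B - {k}. h b)" for h :: "_ \<Rightarrow> 'a"
      using sum.remove[OF fin k(1)] by simp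
    have "f x = (\<Sum>b\<in>B - {k}. (d b - d k * c b / c k) *\<^sub>R b x)" for x
    proof -
      have "c k *\<^sub>R k x = - (\<Sum>b\<in>B - {k}. c b *\<^sub>R b x)"
        using fun_cong[OF dep, of x] split[of "\<lambda>b. c b *\<^sub>R b x"] by (simp add: eq_neg_iff_add_eq_0)
      moreover have "k x = (1 / c k) *\<^sub>R (c k *\<^sub>R k x)" using k(2) by simp
      ultimately have "k x = - (1 / c k) *\<^sub>R (\<Sum>b\<in>B - {k}. c b *\<^sub>R b x)" by simp
      then show ?thesis
        unfolding f split[of "\<lambda>b. d b *\<^sub>R b x"]
        by (simp add: scaleR_diff_left sum_subtractf scaleR_sum_right sum_negf)
    qed
    then show "f \<in> fd_span (B - {k})" by (intro fd_spanI) auto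
  qed
qed

lemma fd_span_independent_subset:
  fixes B :: "('p \<Rightarrow> 'a::real_vector) set"
  assumes "finite B"
  obtains B' where "B' \<subseteq> B" "fd_span B' = fd_span B" "fd_independent B'"
  using assms
proof (induction "card B" arbitrary: B rule: less_induct)
  case less
  show ?case
  proof (cases "fd_independent B")
    case False
    then obtain c k where dep: "(\<lambda>x. \<Sum>b\<in>B. c b *\<^sub>R b x) = (\<lambda>x. 0)" and k: "k \<in> B" "c k \<noteq> 0"
      unfolding fd_independent_def by blast
    have "card (B - {k}) < card B" using less.prems(2) k(1) by (rule card_Diff1_less)
    then show ?thesis
      using less(1)[of "B - {k}"] less.prems fd_span_remove_dependent[OF less.prems(2) k dep] by blast
  qed (use less.prems in blast)
qed

section \<open>Orthogonal projection onto finite spans\<close>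

definition L2_inner :: "'p measure \<Rightarrow> ('p \<Rightarrow> 'a::real_inner) \<Rightarrow> ('p \<Rightarrow> 'a) \<Rightarrow> real" where
  "L2_inner M f g = (LINT x|M. f x \<bullet> g x)"

lemma L2_inner_commute: "L2_inner M f g = L2_inner M g f"
  unfolding L2_inner_def by (simp add: inner_commute)

context finite_measure
begin

lemma integrable_bdd_meas:
  fixes h :: "'a \<Rightarrow> 'b::{banach,second_countable_topology}"
  assumes "bdd_meas M h" shows "integrable M h"
  using assms integrable_const_bound[of h] unfolding bdd_meas_iff by blast

lemma L2_inner_lincomb_right:
  fixes u v w :: "'a \<Rightarrow> 'b::{real_inner,second_countable_topology}"
  assumes "bdd_meas M u" "bdd_meas M v" "bdd_meas M w"
  shows "L2_inner M w (\<lambda>x. a *\<^sub>R u x + b *\<^sub>R v x) = a * L2_inner M w u + b * L2_inner M w v"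
proof -
  have "integrable M (\<lambda>x. w x \<bullet> u x)" "integrable M (\<lambda>x. w x \<bullet> v x)"
    using assms by (blast intro: integrable_bdd_meas bdd_meas_inner)+
  then show ?thesis unfolding L2_inner_def by (simp add: inner_add_right)
qed

lemma L2_inner_diff_right:
  fixes u v w :: "'a \<Rightarrow> 'b::{real_inner,second_countable_topology}"
  assumes "bdd_meas M u" "bdd_meas M v" "bdd_meas M w"
  shows "L2_inner M w (\<lambda>x. u x - v x) = L2_inner M w u - L2_inner M w v"
  using L2_inner_lincomb_right[OF assms, of 1 "-1"] by simp

lemma L2_inner_self_eq_0:
  fixes a w :: "'a \<Rightarrow> 'b::{real_inner,second_countable_topology}"
  assumes "bdd_meas M a" "L2_inner M a a = 0"
  shows "L2_inner M a w = 0"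
proof -
  have "integrable M (\<lambda>x. a x \<bullet> a x)" by (intro integrable_bdd_meas bdd_meas_inner assms(1))
  then have "AE x in M. a x \<bullet> a x = 0"
    using assms(2) integral_nonneg_eq_0_iff_AE[of M "\<lambda>x. a x \<bullet> a x"] unfolding L2_inner_def by simp
  then show ?thesis unfolding L2_inner_def by (intro integral_eq_zero_AE) auto
qed

lemma L2_inner_fd_span_eq:
  fixes B :: "('a \<Rightarrow> 'b::{real_inner,second_countable_topology}) set"
  assumes B: "finite B" "\<And>b. b \<in> B \<Longrightarrow> bdd_meas M b" and "bdd_meas M h" "bdd_meas M p"
    and eq: "\<And>b. b \<in> B \<Longrightarrow> L2_inner M b h = L2_inner M b p" and "v \<in> fd_span B"
  shows "L2_inner M v h = L2_inner M v p"
proof -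
  obtain c where v: "v = (\<lambda>x. \<Sum>b\<in>B. c b *\<^sub>R b x)" using \<open>v \<in> fd_span B\<close> by (elim fd_spanE)
  have "integrable M (\<lambda>x. c b * (b x \<bullet> k x))" if "b \<in> B" "bdd_meas M k" for b k
    using that B by (intro integrable_mult_right integrable_bdd_meas bdd_meas_inner) auto
  then show ?thesis
    using assms unfolding v L2_inner_def by (simp add: inner_sum_left)
qed

lemma L2_inner_line_correction:
  fixes a e :: "'a \<Rightarrow> 'b::{real_inner,second_countable_topology}"
  assumes "bdd_meas M a"
  shows "L2_inner M a e - L2_inner M a e / L2_inner M a a * L2_inner M a a = 0"
  \<comment> \<open>if a vanishes in L2, the quotient is 0 by the convention x / 0 = 0, and so is the pairing\<close>
  using L2_inner_self_eq_0[OF assms, of e] by (cases "L2_inner M a a = 0") simp_all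

lemma fd_span_projection_insert:
  fixes B :: "('a \<Rightarrow> 'b::{real_inner,second_countable_topology}) set"
  assumes B: "finite B" "\<And>b. b \<in> B \<Longrightarrow> bdd_meas M b" and a: "bdd_meas M a" and h: "bdd_meas M h"
    and p: "p \<in> fd_span B" "\<And>v. v \<in> fd_span B \<Longrightarrow> L2_inner M v h = L2_inner M v p"
    and pa: "pa \<in> fd_span B" "\<And>v. v \<in> fd_span B \<Longrightarrow> L2_inner M v a = L2_inner M v pa"
  obtains p' where "p' \<in> fd_span (insert a B)" "\<And>b. b \<in> insert a B \<Longrightarrow> L2_inner M b h = L2_inner M b p'"
proof -
  \<comment> \<open>Gram--Schmidt: correct p along the component a' of a orthogonal to span B\<close>
  define a' where "a' = (\<lambda>x. 1 *\<^sub>R a x + (-1) *\<^sub>R pa x)"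
  define e where "e = (\<lambda>x. h x - p x)"
  define \<alpha> where "\<alpha> = L2_inner M a' e / L2_inner M a' a'"
  define p' where "p' = (\<lambda>x. 1 *\<^sub>R p x + \<alpha> *\<^sub>R a' x)"
  have bdd_span: "bdd_meas M v" if "v \<in> fd_span B" for v using B that by (rule bdd_meas_fd_span)
  have span_mono: "fd_span B \<subseteq> fd_span (insert a B)" using B(1) by (intro fd_span_mono) auto
  have bdd: "bdd_meas M p" "bdd_meas M pa" "bdd_meas M a'" "bdd_meas M e"
    using bdd_span p(1) pa(1) a h unfolding a'_def e_def
    by (auto intro!: bdd_meas_add bdd_meas_diff bdd_meas_scaleR bdd_meas_const)
  have a'_orth: "L2_inner M v a' = 0" and e_orth: "L2_inner M v e = 0" if "v \<in> fd_span B" for v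
    using that p(2) pa(2) L2_inner_lincomb_right[OF a bdd(2) bdd_span, of v 1 "-1"]
      L2_inner_diff_right[OF h bdd(1) bdd_span] unfolding a'_def e_def by auto
  have diff: "L2_inner M b h - L2_inner M b p' = L2_inner M b e - \<alpha> * L2_inner M b a'" if "bdd_meas M b" for b
    using L2_inner_diff_right[OF h bdd(1) that] L2_inner_lincomb_right[OF bdd(1,3) that, of 1 \<alpha>]
    unfolding e_def p'_def by simp
  have a_split: "L2_inner M a z = L2_inner M a' z + L2_inner M pa z" if "bdd_meas M z" for z
    using L2_inner_lincomb_right[OF a bdd(2) that, of 1 "-1"] by (simp add: a'_def L2_inner_commute)
  have "L2_inner M b h = L2_inner M b p'" if "b \<in> insert a B" for b
  proof (cases "b = a")
    case True
    have "L2_inner M a e - \<alpha> * L2_inner M a a' = L2_inner M a' e - \<alpha> * L2_inner M a' a'"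
      using a_split[OF bdd(4)] a_split[OF bdd(3)] a'_orth[OF pa(1)] e_orth[OF pa(1)] by simp
    then show ?thesis
      using diff[OF a] L2_inner_line_correction[OF bdd(3), of e] True unfolding \<alpha>_def by simp
  next
    case False
    then have "b \<in> fd_span B" "bdd_meas M b" using that fd_span_superset[OF B(1)] B(2) by auto
    then show ?thesis using diff[of b] a'_orth[of b] e_orth[of b] by simp
  qed
  moreover have "p' \<in> fd_span (insert a B)"
    unfolding p'_def a'_def using B(1) p(1) pa(1) span_mono fd_span_superset[of "insert a B" a]
    by (intro fd_span_lincomb) auto
  ultimately show ?thesis using that by blast
qed

lemma fd_span_projection:
  fixes B :: "('a \<Rightarrow> 'b::{real_inner,second_countable_topology}) set"
  assumes "finite B" "\<And>b. b \<in> B \<Longrightarrow> bdd_meas M b" "bdd_meas M h"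
  shows "\<exists>p\<in>fd_span B. \<forall>v\<in>fd_span B. L2_inner M v h = L2_inner M v p"
  using assms
proof (induction B arbitrary: h rule: finite_induct)
  case empty
  have "(\<lambda>x. 0) \<in> fd_span {}" by (rule fd_spanI) simp
  then show ?case by (auto simp: fd_span_def L2_inner_def)
next
  case (insert a B)
  have B: "\<And>b. b \<in> B \<Longrightarrow> bdd_meas M b" and a: "bdd_meas M a" using insert.prems by auto
  obtain p where p: "p \<in> fd_span B" "\<forall>v\<in>fd_span B. L2_inner M v h = L2_inner M v p"
    using insert.IH[OF B insert.prems(2)] by blast
  obtain pa where pa: "pa \<in> fd_span B" "\<forall>v\<in>fd_span B. L2_inner M v a = L2_inner M v pa"
    using insert.IH[OF B a] by blast
  obtain p' where p': "p' \<in> fd_span (insert a B)" "\<And>b. b \<in> insert a B \<Longrightarrow> L2_inner M b h = L2_inner M b p'"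
    using fd_span_projection_insert[OF insert.hyps(1) B a insert.prems(2) p(1) _ pa(1)] p(2) pa(2) by blast
  have "bdd_meas M p'" using bdd_meas_fd_span[OF _ insert.prems(1) p'(1)] insert.hyps(1) by blast
  then show ?case using L2_inner_fd_span_eq[of "insert a B" h p'] insert p' by blast
qed

lemma finite_dim_projection:
  fixes V :: "('a \<Rightarrow> 'b::{real_inner,second_countable_topology}) set"
  assumes "finite_dim_fun_space V" "\<And>v. v \<in> V \<Longrightarrow> bdd_meas M v" "bdd_meas M h"
  obtains p where "p \<in> V" "\<And>v. v \<in> V \<Longrightarrow> L2_inner M v h = L2_inner M v p"
proof -
  obtain B where B: "finite B" "V = fd_span B"
    using assms(1) unfolding finite_dim_fun_space_def by blast
  then have "\<And>b. b \<in> B \<Longrightarrow> bdd_meas M b" using assms(2) fd_span_superset by blast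
  then show ?thesis using fd_span_projection[OF B(1) _ assms(3)] B(2) that by blast
qed

lemma integral_lincomb_mult:
  fixes B :: "('a \<Rightarrow> real) set"
  assumes "finite B" "\<And>i. i \<in> B \<Longrightarrow> bdd_meas M i" "bdd_meas M g"
  shows "(LINT x|M. (\<Sum>i\<in>B. \<kappa> i * i x) * g x) = (\<Sum>i\<in>B. \<kappa> i * (LINT x|M. i x * g x))"
proof -
  have "integrable M (\<lambda>x. \<kappa> i * (i x * g x))" if "i \<in> B" for i
    using that assms by (intro integrable_mult_right integrable_bdd_meas bdd_meas_mult) auto
  then show ?thesis using assms(1) by (simp add: sum_distrib_right mult.assoc)
qed

end

section \<open>Gronwall's inequality\<close>

lemma gronwall_Icc:
  fixes E E' :: "real \<Rightarrow> real"
  assumes "a \<le> b" and cont: "continuous_on {a..b} E"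
    and deriv: "\<And>s. a < s \<Longrightarrow> s < b \<Longrightarrow> (E has_real_derivative E' s) (at s)"
    and bound: "\<And>s. a < s \<Longrightarrow> s < b \<Longrightarrow> E' s \<le> L * E s"
  shows "E b \<le> E a * exp (L * (b - a))"
proof -
  define \<Phi> where "\<Phi> s = E s * exp (- L * s)" for s
  have "\<Phi> b \<le> \<Phi> a"
  proof (rule DERIV_nonpos_imp_decreasing_open[OF \<open>a \<le> b\<close>])
    fix s assume s: "a < s" "s < b"
    have "(\<Phi> has_real_derivative E' s * exp (- L * s) + E s * (exp (- L * s) * - L)) (at s)"
      using deriv[OF s] unfolding \<Phi>_def by (auto intro!: derivative_eq_intros)
    moreover have "E' s * exp (- L * s) + E s * (exp (- L * s) * - L) = (E' s - L * E s) * exp (- L * s)"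
      by (simp add: algebra_simps)
    moreover have "\<dots> \<le> 0" using bound[OF s] by (simp add: mult_nonpos_nonneg)
    ultimately show "\<exists>y. (\<Phi> has_real_derivative y) (at s) \<and> y \<le> 0" by auto
  qed (unfold \<Phi>_def, intro continuous_intros cont)
  then have "E b * exp (- L * b) * exp (L * b) \<le> E a * exp (- L * a) * exp (L * b)"
    unfolding \<Phi>_def by (intro mult_right_mono) auto
  then show ?thesis by (simp add: mult.assoc exp_add[symmetric] algebra_simps)
qed

lemma gronwall_Icc_backward:
  fixes E E' :: "real \<Rightarrow> real"
  assumes "a \<le> b" and cont: "continuous_on {a..b} E"
    and deriv: "\<And>s. a < s \<Longrightarrow> s < b \<Longrightarrow> (E has_real_derivative E' s) (at s)"
    and bound: "\<And>s. a < s \<Longrightarrow> s < b \<Longrightarrow> - E' s \<le> L * E s"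
  shows "E a \<le> E b * exp (L * (b - a))"
proof -
  have "continuous_on {-b..-a} (\<lambda>s. E (- s))"
    by (rule continuous_on_compose2[OF cont]) (auto intro: continuous_intros)
  moreover have "((\<lambda>s. E (- s)) has_real_derivative - E' (- s)) (at s)" if "-b < s" "s < -a" for s
    using deriv[of "- s"] that DERIV_mirror[where f = E and x = s and y = "E' (- s)"] by simp
  ultimately show ?thesis
    using gronwall_Icc[of "-b" "-a" "\<lambda>s. E (- s)" "\<lambda>s. - E' (- s)" L] assms(1) bound
    by (simp add: algebra_simps)
qed

lemma gronwall_vanishing:
  fixes E E' :: "real \<Rightarrow> real"
  assumes cont: "continuous_on {min t0 t..max t0 t} E"
    and deriv: "\<And>s. min t0 t < s \<Longrightarrow> s < max t0 t \<Longrightarrow> (E has_real_derivative E' s) (at s)"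
    and bound: "\<And>s. min t0 t < s \<Longrightarrow> s < max t0 t \<Longrightarrow> \<bar>E' s\<bar> \<le> L * E s"
    and "E t0 = 0" "E t \<ge> 0"
  shows "E t = 0"
proof (cases "t0 \<le> t")
  case True
  then have "E t \<le> E t0 * exp (L * (t - t0))"
    using assms by (intro gronwall_Icc[where E' = E']) (auto simp: min_def max_def abs_le_iff)
  then show ?thesis using assms by simp
next
  case False
  then have "E t \<le> E t0 * exp (L * (t0 - t))"
    using assms by (intro gronwall_Icc_backward[where E' = E']) (auto simp: min_def max_def abs_le_iff)
  then show ?thesis using assms by simp
qed

section \<open>Uniform coercivity of continuous families of matrices\<close>

definition l1_unit_sphere :: "'i set \<Rightarrow> ('i \<Rightarrow> real) set" where
  "l1_unit_sphere B = PiE UNIV (\<lambda>i. if i \<in> B then {-1..1} else {0}) \<inter> {\<kappa>. (\<Sum>i\<in>B. \<bar>\<kappa> i\<bar>) = 1}"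

lemma compact_l1_unit_sphere: "compact (l1_unit_sphere (B :: 'i set))"
proof -
  have "compactin (product_topology (\<lambda>_. euclidean) UNIV) (PiE UNIV (\<lambda>i. if i \<in> B then {-1..1::real} else {0}))"
    by (subst compactin_PiE) auto
  then have "compact (PiE UNIV (\<lambda>i. if i \<in> B then {-1..1::real} else {0}))"
    by (simp add: euclidean_product_topology)
  moreover have "closed {\<kappa>::'i \<Rightarrow> real. (\<Sum>i\<in>B. \<bar>\<kappa> i\<bar>) = 1}"
    by (intro closed_Collect_eq continuous_intros continuous_on_product_coordinates)
  ultimately show ?thesis unfolding l1_unit_sphere_def by (rule compact_Int_closed)
qed

lemma l1_unit_sphere_nonzero: "\<kappa> \<in> l1_unit_sphere B \<Longrightarrow> \<exists>i\<in>B. \<kappa> i \<noteq> 0"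
  unfolding l1_unit_sphere_def by (force intro: ccontr)

lemma l1_normalize_mem_l1_unit_sphere:
  assumes "finite B" and \<sigma>: "\<sigma> = (\<Sum>i\<in>B. \<bar>\<kappa> i\<bar>)" "\<sigma> > 0"
  shows "(\<lambda>i. if i \<in> B then \<kappa> i / \<sigma> else 0) \<in> l1_unit_sphere B" (is "?\<kappa> \<in> _")
proof -
  have "\<bar>\<kappa> i\<bar> \<le> \<sigma>" if "i \<in> B" for i unfolding \<sigma>(1) using assms(1) that by (intro member_le_sum) auto
  then have "\<bar>?\<kappa> i\<bar> \<le> 1" for i using \<sigma>(2) by (simp add: abs_divide)
  then have "?\<kappa> i \<in> (if i \<in> B then {-1..1} else {0})" for i
    using abs_le_iff[of "?\<kappa> i" 1] by (auto split: if_splits)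
  moreover have "(\<Sum>i\<in>B. \<bar>?\<kappa> i\<bar>) = 1"
    using \<sigma> by (simp add: abs_divide sum_divide_distrib[symmetric] cong: sum.cong)
  ultimately show ?thesis unfolding l1_unit_sphere_def by (simp add: PiE_UNIV_domain Pi_iff)
qed

lemma uniform_lower_bound_injective_family:
  fixes A :: "'i \<Rightarrow> 'j \<Rightarrow> real \<Rightarrow> real"
  assumes fin: "finite B" and "compact S"
    and cont: "\<And>i j. i \<in> B \<Longrightarrow> j \<in> C \<Longrightarrow> continuous_on S (A i j)"
    and inj: "\<And>s \<kappa>. s \<in> S \<Longrightarrow> (\<Sum>j\<in>C. \<bar>\<Sum>i\<in>B. \<kappa> i * A i j s\<bar>) = 0 \<Longrightarrow> \<forall>i\<in>B. \<kappa> i = 0"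
  obtains \<delta> where "\<delta> > 0" "\<And>s \<kappa>. s \<in> S \<Longrightarrow> \<delta> * (\<Sum>i\<in>B. \<bar>\<kappa> i\<bar>) \<le> (\<Sum>j\<in>C. \<bar>\<Sum>i\<in>B. \<kappa> i * A i j s\<bar>)"
proof -
  define H where "H s \<kappa> = (\<Sum>j\<in>C. \<bar>\<Sum>i\<in>B. \<kappa> i * A i j s\<bar>)" for s and \<kappa> :: "'i \<Rightarrow> real"
  define Sph where "Sph = l1_unit_sphere B"
  \<comment> \<open>H is continuous and, by injectivity, positive on the compact set S \<times> Sph;
      its minimum there is the bound, by homogeneity of H in \<kappa>.\<close>
  have "compact (S \<times> Sph)" unfolding Sph_def using \<open>compact S\<close> compact_l1_unit_sphere by (rule compact_Times)
  moreover have "continuous_on (S \<times> Sph) (\<lambda>z. H (fst z) (snd z))" unfolding H_def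
    by (intro continuous_intros continuous_on_compose2[OF cont continuous_on_fst]
        continuous_on_compose2[OF continuous_on_product_coordinates continuous_on_snd]) auto
  ultimately obtain \<delta> where \<delta>: "\<And>z. z \<in> S \<times> Sph \<Longrightarrow> \<delta> \<le> H (fst z) (snd z)"
    and \<delta>_attained: "S \<times> Sph \<noteq> {} \<Longrightarrow> \<exists>z\<in>S \<times> Sph. H (fst z) (snd z) = \<delta>"
    using continuous_attains_inf[of "S \<times> Sph"] by (metis (no_types, lifting) all_not_in_conv)
  define \<delta>' where "\<delta>' = (if S \<times> Sph = {} then 1 else \<delta>)"
  have "\<delta>' > 0"
  proof (cases "S \<times> Sph = {}")
    case False
    then obtain s \<kappa> where z: "s \<in> S" "\<kappa> \<in> Sph" "H s \<kappa> = \<delta>" using \<delta>_attained by auto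
    then have "H s \<kappa> \<noteq> 0" using inj[OF z(1), of \<kappa>] l1_unit_sphere_nonzero unfolding H_def Sph_def by blast
    moreover have "H s \<kappa> \<ge> 0" unfolding H_def by (simp add: sum_nonneg)
    ultimately show ?thesis using z(3) False unfolding \<delta>'_def by simp
  qed (simp add: \<delta>'_def)
  moreover have "\<delta>' * (\<Sum>i\<in>B. \<bar>\<kappa> i\<bar>) \<le> H s \<kappa>" if s: "s \<in> S" for s \<kappa>
  proof (cases "(\<Sum>i\<in>B. \<bar>\<kappa> i\<bar>) = 0")
    case False
    define \<sigma> where "\<sigma> = (\<Sum>i\<in>B. \<bar>\<kappa> i\<bar>)"
    have "\<sigma> > 0" using False unfolding \<sigma>_def by (simp add: sum_nonneg order_le_neq_trans)
    define \<kappa>' where "\<kappa>' i = (if i \<in> B then \<kappa> i / \<sigma> else 0)" for i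
    have "\<kappa>' \<in> Sph" unfolding Sph_def \<kappa>'_def using fin \<sigma>_def \<open>\<sigma> > 0\<close> by (rule l1_normalize_mem_l1_unit_sphere)
    then have "\<delta>' \<le> H s \<kappa>'" using \<delta> s False unfolding \<delta>'_def by auto
    moreover have "H s \<kappa>' = H s \<kappa> / \<sigma>"
      using \<open>\<sigma> > 0\<close> unfolding H_def \<kappa>'_def
      by (simp add: sum_divide_distrib[symmetric] abs_divide cong: sum.cong)
    ultimately show ?thesis using \<open>\<sigma> > 0\<close> unfolding \<sigma>_def by (simp add: field_simps)
  qed (simp add: H_def sum_nonneg)
  ultimately show ?thesis using that unfolding H_def by blast
qed

lemma energy_derivative_estimate:
  fixes m dm :: "'j \<Rightarrow> real"
  assumes "finite C" "\<delta> > 0" "K \<ge> 0"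
    and coercive: "\<delta> * \<sigma> \<le> (\<Sum>j\<in>C. \<bar>m j\<bar>)" and dm: "\<And>j. j \<in> C \<Longrightarrow> \<bar>dm j\<bar> \<le> K * \<sigma>"
  shows "\<bar>\<Sum>j\<in>C. 2 * m j * dm j\<bar> \<le> 2 * K * card C / \<delta> * (\<Sum>j\<in>C. (m j)\<^sup>2)"
proof -
  define \<mu> where "\<mu> = (\<Sum>j\<in>C. \<bar>m j\<bar>)"
  have "\<bar>\<Sum>j\<in>C. 2 * m j * dm j\<bar> \<le> (\<Sum>j\<in>C. 2 * \<bar>m j\<bar> * (K * \<sigma>))"
    using dm by (intro order.trans[OF sum_abs] sum_mono) (simp add: abs_mult mult_left_mono)
  also have "\<dots> = 2 * (K * \<sigma>) * \<mu>" unfolding \<mu>_def by (simp add: sum_distrib_left sum_distrib_right ac_simps)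
  also have "\<dots> \<le> 2 * (K * (\<mu> / \<delta>)) * \<mu>"
    using assms(2,3) coercive unfolding \<mu>_def
    by (intro mult_right_mono mult_left_mono sum_nonneg) (auto simp: field_simps)
  also have "\<dots> = 2 * K / \<delta> * \<mu>\<^sup>2" by (simp add: power2_eq_square)
  also have "\<mu>\<^sup>2 \<le> card C * (\<Sum>j\<in>C. (m j)\<^sup>2)"
    using Cauchy_Schwarz_ineq_sum[of "\<lambda>_. 1" "\<lambda>j. \<bar>m j\<bar>" C] unfolding \<mu>_def by simp
  then have "2 * K / \<delta> * \<mu>\<^sup>2 \<le> 2 * K / \<delta> * (card C * (\<Sum>j\<in>C. (m j)\<^sup>2))"
    using assms(2,3) by (intro mult_left_mono) auto
  finally show ?thesis by simp
qed

section \<open>Conservation of constant potential vorticity\<close>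

locale pv_evolution =
  fixes M :: "'p::topological_space measure"
    and khat :: "'p \<Rightarrow> real^3" and E :: "'p set set"
    and grad :: "('p \<Rightarrow> real) \<Rightarrow> ('p \<Rightarrow> real^3)" and sdiv :: "('p \<Rightarrow> real^3) \<Rightarrow> ('p \<Rightarrow> real)"
    and V0 :: "('p \<Rightarrow> real) set" and V1 :: "('p \<Rightarrow> real^3) set" and V2 :: "('p \<Rightarrow> real) set"
    and g :: real and f b :: "'p \<Rightarrow> real" and I :: "real set"
    and u F :: "real \<Rightarrow> 'p \<Rightarrow> real^3" and D \<zeta> q :: "real \<Rightarrow> 'p \<Rightarrow> real" and c :: real
  assumes setting: "primal_setting M khat E grad sdiv V0 V1 V2"
    and f_Linf: "bdd_meas M f"
    and I_int: "is_interval I" and zero_I: "0 \<in> I"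
    and D_V2: "\<forall>t\<in>I. D t \<in> V2"
    and F_V1: "\<forall>t\<in>I. F t \<in> V1" and F_cont: "weak_cont M I V1 F"
    and D_pos: "\<forall>t\<in>I. \<forall>x. D t x > 0"
    and vort: "\<forall>t\<in>I. \<zeta> t \<in> V0 \<and>
        (\<forall>\<gamma>\<in>V0. (LINT x|M. \<gamma> x * \<zeta> t x) = - (LINT x|M. perp khat (grad \<gamma>) x \<bullet> u t x))"
    and pv: "\<forall>t\<in>I. q t \<in> V0 \<and>
        (\<forall>\<gamma>\<in>V0. (LINT x|M. \<gamma> x * q t x * D t x) = (LINT x|M. \<gamma> x * (\<zeta> t x + f x)))"
    and momentum_eq: "\<forall>t\<in>I. \<forall>w\<in>V1.
        ((\<lambda>s. LINT x|M. w x \<bullet> u s x) has_real_derivative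
          (- (LINT x|M. w x \<bullet> perp khat (\<lambda>y. q t y *\<^sub>R F t y) x)
           + (LINT x|M. sdiv w x * (g * (D t x + b x) + (1/2) * (norm (u t x))\<^sup>2)))) (at t within I)"
    and continuity_eq: "\<forall>t\<in>I. \<forall>\<phi>\<in>V2.
        ((\<lambda>s. LINT x|M. \<phi> x * D s x) has_real_derivative
          (- (LINT x|M. \<phi> x * sdiv (F t) x))) (at t within I)"
    and q0: "\<forall>x. q 0 x = c"
begin

lemma finite_M: "finite_measure M" and space_M: "space M = UNIV" and sets_M: "sets M = sets borel"
  and open_pos: "\<And>U. open U \<Longrightarrow> U \<noteq> {} \<Longrightarrow> emeasure M U > 0"
  and khat_meas: "khat \<in> borel_measurable M" and norm_khat: "\<And>x. norm (khat x) = 1"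
  and V0_fin: "finite_dim_fun_space V0" and V1_fin: "finite_dim_fun_space V1"
  and V2_fin: "finite_dim_fun_space V2"
  and V0_cont: "\<And>\<gamma>. \<gamma> \<in> V0 \<Longrightarrow> continuous_on UNIV \<gamma>"
  and V0_bdd: "\<And>\<gamma>. \<gamma> \<in> V0 \<Longrightarrow> bdd_meas M \<gamma>"
  and V1_bdd: "\<And>w. w \<in> V1 \<Longrightarrow> bdd_meas M w"
  and V2_bdd: "\<And>\<phi>. \<phi> \<in> V2 \<Longrightarrow> bdd_meas M \<phi>"
  and const_V0: "\<And>c. (\<lambda>_. c) \<in> V0"
  and perp_grad_V1: "\<And>\<gamma>. \<gamma> \<in> V0 \<Longrightarrow> perp khat (grad \<gamma>) \<in> V1"
  and sdiv_V2: "\<And>w. w \<in> V1 \<Longrightarrow> sdiv w \<in> V2"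
  and grad_tangent: "\<And>\<gamma> x. \<gamma> \<in> V0 \<Longrightarrow> grad \<gamma> x \<bullet> khat x = 0"
  and green: "\<And>\<gamma> w. \<gamma> \<in> V0 \<Longrightarrow> w \<in> V1 \<Longrightarrow>
     (LINT x|M. \<gamma> x * sdiv w x) = - (LINT x|M. grad \<gamma> x \<bullet> w x)"
  and sdiv_perp_grad: "\<And>\<gamma>. \<gamma> \<in> V0 \<Longrightarrow> AE x in M. sdiv (perp khat (grad \<gamma>)) x = 0"
  using setting unfolding primal_setting_def by auto

end

sublocale pv_evolution \<subseteq> finite_measure M
  by (rule finite_M)

context pv_evolution
begin

lemma inner_khat_self: "khat x \<bullet> khat x = 1"
  using norm_khat[of x] by (simp add: power2_norm_eq_inner[symmetric])

lemma bdd_meas_grad: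
  assumes "\<gamma> \<in> V0" shows "bdd_meas M (grad \<gamma>)"
proof -
  \<comment> \<open>grad is tangent, so it is recovered from its rotation as (khat \<times> grad) \<times> khat.\<close>
  have "grad \<gamma> x = cross3 (perp khat (grad \<gamma>) x) (khat x)" for x
    using cross3_cross3_self[of "khat x" "grad \<gamma> x"] inner_khat_self[of x] grad_tangent[OF assms, of x]
    by (simp add: perp_def)
  then have grad_eq: "grad \<gamma> = (\<lambda>x. cross3 (perp khat (grad \<gamma>) x) (khat x))" by blast
  have "bdd_meas M khat"
    using khat_meas norm_khat unfolding bdd_meas_iff by (auto intro: exI[of _ 1])
  then show ?thesis by (subst grad_eq) (rule bdd_meas_cross3[OF V1_bdd[OF perp_grad_V1[OF assms]]])
qed

lemma inner_perp_grad: "\<gamma> \<in> V0 \<Longrightarrow> perp khat (grad \<gamma>) x \<bullet> perp khat h x = grad \<gamma> x \<bullet> h x"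
  using inner_cross3_cross3[of "khat x" "grad \<gamma> x" "h x"] inner_khat_self[of x] grad_tangent[of \<gamma> x]
  by (simp add: perp_def inner_commute)

lemma V2_projection:
  assumes "bdd_meas M h"
  obtains \<phi> where "\<phi> \<in> V2" "\<And>v. v \<in> V2 \<Longrightarrow> (LINT x|M. h x * v x) = (LINT x|M. \<phi> x * v x)"
proof -
  obtain \<phi> where \<phi>: "\<phi> \<in> V2" "\<And>v. v \<in> V2 \<Longrightarrow> L2_inner M v h = L2_inner M v \<phi>"
    using finite_dim_projection[OF V2_fin V2_bdd assms] by blast
  then show ?thesis using that unfolding L2_inner_def by (simp add: mult.commute)
qed

lemma pv_moment_deriv:
  assumes t: "t \<in> I" and \<gamma>: "\<gamma> \<in> V0"
  shows "((\<lambda>s. LINT x|M. \<gamma> x * q s x * D s x) has_real_derivative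
           (LINT x|M. q t x * (grad \<gamma> x \<bullet> F t x))) (at t within I)"
proof -
  define w where "w = perp khat (grad \<gamma>)"
  have w: "w \<in> V1" unfolding w_def using perp_grad_V1[OF \<gamma>] .
  have moment_eq: "(LINT x|M. \<gamma> x * q s x * D s x) = (LINT x|M. \<gamma> x * f x) - (LINT x|M. w x \<bullet> u s x)"
    if s: "s \<in> I" for s
  proof -
    have "integrable M (\<lambda>x. \<gamma> x * \<zeta> s x)" "integrable M (\<lambda>x. \<gamma> x * f x)"
      using vort s \<gamma> f_Linf by (blast intro: integrable_bdd_meas bdd_meas_mult V0_bdd)+
    then have "(LINT x|M. \<gamma> x * (\<zeta> s x + f x)) = (LINT x|M. \<gamma> x * \<zeta> s x) + (LINT x|M. \<gamma> x * f x)"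
      by (simp add: distrib_left)
    then show ?thesis using pv vort s \<gamma> unfolding w_def by simp
  qed
  \<comment> \<open>The vorticity is tested against rotated gradients, whose divergence vanishes:
      only the PV flux survives in the momentum equation.\<close>
  have "(LINT x|M. w x \<bullet> perp khat (\<lambda>y. q t y *\<^sub>R F t y) x) = (LINT x|M. q t x * (grad \<gamma> x \<bullet> F t x))"
    unfolding w_def using inner_perp_grad[OF \<gamma>] by simp
  moreover have "(LINT x|M. sdiv w x * (g * (D t x + b x) + (1/2) * (norm (u t x))\<^sup>2)) = 0"
    by (rule integral_eq_zero_AE) (use sdiv_perp_grad[OF \<gamma>] in \<open>auto simp: w_def\<close>)
  ultimately have "((\<lambda>s. LINT x|M. w x \<bullet> u s x) has_real_derivative
      - (LINT x|M. q t x * (grad \<gamma> x \<bullet> F t x))) (at t within I)"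
    using momentum_eq t w by fastforce
  then have "((\<lambda>s. (LINT x|M. \<gamma> x * f x) - (LINT x|M. w x \<bullet> u s x)) has_real_derivative
      (LINT x|M. q t x * (grad \<gamma> x \<bullet> F t x))) (at t within I)"
    using DERIV_diff[OF DERIV_const] by fastforce
  then show ?thesis
    by (rule has_field_derivative_transform_within[where d = 1]) (use moment_eq t in auto)
qed

lemma mass_moment_deriv:
  assumes t: "t \<in> I" and \<gamma>: "\<gamma> \<in> V0"
  shows "((\<lambda>s. LINT x|M. \<gamma> x * D s x) has_real_derivative (LINT x|M. grad \<gamma> x \<bullet> F t x)) (at t within I)"
proof -
  obtain \<phi> where \<phi>: "\<phi> \<in> V2" "\<And>v. v \<in> V2 \<Longrightarrow> (LINT x|M. \<gamma> x * v x) = (LINT x|M. \<phi> x * v x)"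
    using V2_projection[OF V0_bdd[OF \<gamma>]] by blast
  have "(LINT x|M. \<phi> x * sdiv (F t) x) = - (LINT x|M. grad \<gamma> x \<bullet> F t x)"
    using \<phi>(2) green[OF \<gamma>] F_V1 sdiv_V2 t by metis
  then have "((\<lambda>s. LINT x|M. \<phi> x * D s x) has_real_derivative (LINT x|M. grad \<gamma> x \<bullet> F t x)) (at t within I)"
    using continuity_eq t \<phi>(1) by fastforce
  then show ?thesis
    by (rule has_field_derivative_transform_within[where d = 1]) (use \<phi>(2) D_V2 t in auto)
qed

definition anomaly_moment :: "('p \<Rightarrow> real) \<Rightarrow> real \<Rightarrow> real" where
  "anomaly_moment \<gamma> s = (LINT x|M. \<gamma> x * (q s x - c) * D s x)"

definition anomaly_flux :: "('p \<Rightarrow> real) \<Rightarrow> real \<Rightarrow> real" where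
  "anomaly_flux \<gamma> s = (LINT x|M. (q s x - c) * (grad \<gamma> x \<bullet> F s x))"

lemma anomaly_moment_deriv:
  assumes t: "t \<in> I" and \<gamma>: "\<gamma> \<in> V0"
  shows "(anomaly_moment \<gamma> has_real_derivative anomaly_flux \<gamma> t) (at t within I)"
proof -
  have split: "(LINT x|M. k x * (h x - c) * l x) = (LINT x|M. k x * h x * l x) - c * (LINT x|M. k x * l x)"
    if "bdd_meas M k" "bdd_meas M h" "bdd_meas M l" for k h l :: "'p \<Rightarrow> real"
  proof -
    have "integrable M (\<lambda>x. k x * h x * l x)" "integrable M (\<lambda>x. k x * l x)"
      using that by (auto intro!: integrable_bdd_meas bdd_meas_mult)
    then show ?thesis by (simp add: algebra_simps)
  qed
  have "bdd_meas M (grad \<gamma>)" "bdd_meas M (F t)" "bdd_meas M (q t)"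
    using bdd_meas_grad[OF \<gamma>] F_V1 pv t V1_bdd V0_bdd by auto
  then have flux: "anomaly_flux \<gamma> t = (LINT x|M. q t x * (grad \<gamma> x \<bullet> F t x)) - c * (LINT x|M. grad \<gamma> x \<bullet> F t x)"
    unfolding anomaly_flux_def using split[of "\<lambda>_. 1" "q t" "\<lambda>x. grad \<gamma> x \<bullet> F t x"]
    by (simp add: bdd_meas_const bdd_meas_inner)
  have moment: "anomaly_moment \<gamma> s = (LINT x|M. \<gamma> x * q s x * D s x) - c * (LINT x|M. \<gamma> x * D s x)"
    if "s \<in> I" for s
    unfolding anomaly_moment_def using that pv D_V2 by (intro split V0_bdd V2_bdd \<gamma>) auto
  have "(anomaly_moment \<gamma> has_real_derivative
      (LINT x|M. q t x * (grad \<gamma> x \<bullet> F t x)) - c * (LINT x|M. grad \<gamma> x \<bullet> F t x)) (at t within I)"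
    using DERIV_diff[OF pv_moment_deriv[OF t \<gamma>] DERIV_cmult[OF mass_moment_deriv[OF t \<gamma>], of c]]
    by (rule has_field_derivative_transform_within[where d = 1]) (use moment t in auto)
  then show ?thesis unfolding flux .
qed

lemma continuous_on_weighted_integral:
  assumes "bdd_meas M h" shows "continuous_on I (\<lambda>s. LINT x|M. h x * D s x)"
proof -
  obtain \<phi> where \<phi>: "\<phi> \<in> V2" "\<And>v. v \<in> V2 \<Longrightarrow> (LINT x|M. h x * v x) = (LINT x|M. \<phi> x * v x)"
    using V2_projection[OF assms] by blast
  have "continuous_on I (\<lambda>s. LINT x|M. \<phi> x * D s x)"
    unfolding continuous_on_eq_continuous_within using continuity_eq \<phi>(1) DERIV_continuous by blast
  then show ?thesis by (rule continuous_on_eq) (use \<phi>(2) D_V2 in auto)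
qed

lemma continuous_on_flux_integral:
  assumes "bdd_meas M w" shows "continuous_on I (\<lambda>s. LINT x|M. w x \<bullet> F s x)"
proof -
  obtain v where v: "v \<in> V1" "\<And>z. z \<in> V1 \<Longrightarrow> L2_inner M z w = L2_inner M z v"
    using finite_dim_projection[OF V1_fin V1_bdd assms] by blast
  have "continuous_on I (\<lambda>s. LINT x|M. v x \<bullet> F s x)" using F_cont v(1) unfolding weak_cont_def by blast
  moreover have "(LINT x|M. v x \<bullet> F s x) = (LINT x|M. w x \<bullet> F s x)" if "s \<in> I" for s
    using v(2)[of "F s"] F_V1 that unfolding L2_inner_def by (simp add: inner_commute)
  ultimately show ?thesis by (rule continuous_on_eq)
qed

lemma V0_eq_0_if_weighted_square_eq_0:
  assumes s: "s \<in> I" and \<rho>: "\<rho> \<in> V0" and "(LINT x|M. \<rho> x * \<rho> x * D s x) = 0"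
  shows "\<rho> x = 0"
proof (rule ccontr)
  assume "\<rho> x \<noteq> 0"
  have "integrable M (\<lambda>x. \<rho> x * \<rho> x * D s x)"
    using \<rho> D_V2 s by (intro integrable_bdd_meas bdd_meas_mult V0_bdd V2_bdd) auto
  moreover have "AE x in M. 0 \<le> \<rho> x * \<rho> x * D s x" using D_pos s by (simp add: less_imp_le)
  ultimately have "AE x in M. \<rho> x * \<rho> x * D s x = 0" using assms(3) integral_nonneg_eq_0_iff_AE by blast
  moreover have "D s y \<noteq> 0" for y using D_pos s by (metis less_irrefl)
  ultimately have AE_0: "AE y in M. \<rho> y = 0" by (auto elim!: eventually_mono)
  \<comment> \<open>a continuous function vanishing almost everywhere vanishes, as open sets have positive area\<close>
  have "open {y. \<rho> y \<noteq> 0}" using V0_cont[OF \<rho>] by (intro open_Collect_neq continuous_intros)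
  moreover from this have "{y. \<rho> y \<noteq> 0} \<in> sets M" using sets_M by simp
  then have "emeasure M {y. \<rho> y \<noteq> 0} = 0"
    using AE_iff_measurable[of "{y. \<rho> y \<noteq> 0}" M "\<lambda>y. \<rho> y = 0"] AE_0 space_M by simp
  ultimately show False using open_pos \<open>\<rho> x \<noteq> 0\<close> by fastforce
qed

definition weighted_mass :: "('p \<Rightarrow> real) \<Rightarrow> ('p \<Rightarrow> real) \<Rightarrow> real \<Rightarrow> real" where
  "weighted_mass i j s = (LINT x|M. i x * (j x * D s x))"

definition flux_pairing :: "('p \<Rightarrow> real) \<Rightarrow> ('p \<Rightarrow> real) \<Rightarrow> real \<Rightarrow> real" where
  "flux_pairing i j s = (LINT x|M. i x * (grad j x \<bullet> F s x))"

lemma anomaly_lincomb: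
  assumes "finite B" "fd_span B = V0" "s \<in> I"
  obtains a where "\<And>x. q s x - c = (\<Sum>i\<in>B. a i * i x)"
    "\<And>j. j \<in> V0 \<Longrightarrow> anomaly_moment j s = (\<Sum>i\<in>B. a i * weighted_mass i j s)"
    "\<And>j. j \<in> V0 \<Longrightarrow> anomaly_flux j s = (\<Sum>i\<in>B. a i * flux_pairing i j s)"
proof -
  have "(\<lambda>x. 1 *\<^sub>R q s x + (- c) *\<^sub>R 1) \<in> V0"
    using fd_span_lincomb[of "q s" B "\<lambda>_. 1"] assms(2) pv const_V0 \<open>s \<in> I\<close> by blast
  then obtain a where a: "(\<lambda>x. q s x - c) = (\<lambda>x. \<Sum>i\<in>B. a i * i x)"
    using assms(2) by (auto elim!: fd_spanE)
  have B_bdd: "\<And>i. i \<in> B \<Longrightarrow> bdd_meas M i" using assms(1,2) fd_span_superset V0_bdd by blast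
  have qa: "q s x - c = (\<Sum>i\<in>B. a i * i x)" for x using fun_cong[OF a, of x] by simp
  show ?thesis
  proof (rule that[OF qa])
    fix j assume j: "j \<in> V0"
    have "bdd_meas M (\<lambda>x. j x * D s x)" "bdd_meas M (\<lambda>x. grad j x \<bullet> F s x)"
      using D_V2 F_V1 \<open>s \<in> I\<close> bdd_meas_mult[OF V0_bdd[OF j] V2_bdd] bdd_meas_inner[OF bdd_meas_grad[OF j] V1_bdd]
      by auto
    moreover have "anomaly_moment j s = (LINT x|M. (\<Sum>i\<in>B. a i * i x) * (j x * D s x))"
      "anomaly_flux j s = (LINT x|M. (\<Sum>i\<in>B. a i * i x) * (grad j x \<bullet> F s x))"
      unfolding anomaly_moment_def anomaly_flux_def qa by (simp_all add: mult_ac)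
    ultimately show "anomaly_moment j s = (\<Sum>i\<in>B. a i * weighted_mass i j s)"
      and "anomaly_flux j s = (\<Sum>i\<in>B. a i * flux_pairing i j s)"
      using integral_lincomb_mult[OF assms(1) B_bdd] by (simp_all add: weighted_mass_def flux_pairing_def)
  qed
qed

lemma weighted_mass_injective:
  assumes B: "finite B" "fd_span B = V0" "fd_independent B" and s: "s \<in> I"
    and "(\<Sum>j\<in>B. \<bar>\<Sum>i\<in>B. \<kappa> i * weighted_mass i j s\<bar>) = 0"
  shows "\<forall>i\<in>B. \<kappa> i = 0"
proof -
  define \<rho> where "\<rho> x = (\<Sum>i\<in>B. \<kappa> i * i x)" for x
  have \<rho>: "\<rho> \<in> V0" unfolding B(2)[symmetric] \<rho>_def by (rule fd_spanI[where c = \<kappa>]) simp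
  have B_bdd: "\<And>i. i \<in> B \<Longrightarrow> bdd_meas M i" using B(1,2) fd_span_superset V0_bdd by blast
  have D_bdd: "bdd_meas M (D s)" using D_V2 s V2_bdd by blast
  have "(\<Sum>i\<in>B. \<kappa> i * weighted_mass i j s) = 0" if "j \<in> B" for j
    using assms(5) B(1) that by (simp add: sum_nonneg_eq_0_iff)
  moreover have "(\<Sum>i\<in>B. \<kappa> i * weighted_mass i j s) = (LINT x|M. j x * (\<rho> x * D s x))" if "j \<in> B" for j
    using integral_lincomb_mult[OF B(1) B_bdd bdd_meas_mult[OF B_bdd[OF that] D_bdd], of \<kappa>]
    unfolding weighted_mass_def \<rho>_def by (simp add: mult_ac)
  ultimately have "(LINT x|M. \<rho> x * \<rho> x * D s x) = 0"
    using integral_lincomb_mult[OF B(1) B_bdd bdd_meas_mult[OF V0_bdd[OF \<rho>] D_bdd], of \<kappa>]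
    unfolding \<rho>_def by (simp add: mult.assoc)
  then have "\<rho> x = 0" for x by (rule V0_eq_0_if_weighted_square_eq_0[OF s \<rho>])
  then have "(\<lambda>x. \<Sum>i\<in>B. \<kappa> i *\<^sub>R i x) = (\<lambda>x. 0)" unfolding \<rho>_def by simp
  then show ?thesis using B(3) unfolding fd_independent_def by simp
qed

definition anomaly_energy :: "('p \<Rightarrow> real) set \<Rightarrow> real \<Rightarrow> real" where
  "anomaly_energy B s = (\<Sum>j\<in>B. (anomaly_moment j s)\<^sup>2)"

lemma anomaly_energy_deriv:
  assumes "B \<subseteq> V0" "t \<in> I"
  shows "(anomaly_energy B has_real_derivative (\<Sum>j\<in>B. 2 * anomaly_moment j t * anomaly_flux j t)) (at t within I)"
  unfolding anomaly_energy_def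
  using assms by (intro DERIV_sum derivative_eq_intros) (auto simp: mult_ac intro!: anomaly_moment_deriv)

lemma anomaly_energy_estimate:
  assumes B: "finite B" "fd_span B = V0" and s: "s \<in> I" and "\<delta> > 0" "K \<ge> 0"
    and coercive: "\<And>\<kappa>. \<delta> * (\<Sum>i\<in>B. \<bar>\<kappa> i\<bar>) \<le> (\<Sum>j\<in>B. \<bar>\<Sum>i\<in>B. \<kappa> i * weighted_mass i j s\<bar>)"
    and flux_bound: "\<And>i j. i \<in> B \<Longrightarrow> j \<in> B \<Longrightarrow> \<bar>flux_pairing i j s\<bar> \<le> K"
  shows "\<bar>\<Sum>j\<in>B. 2 * anomaly_moment j s * anomaly_flux j s\<bar> \<le> 2 * K * card B / \<delta> * anomaly_energy B s"
    and "anomaly_energy B s = 0 \<Longrightarrow> q s x = c"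
proof -
  obtain a where qa: "\<And>x. q s x - c = (\<Sum>i\<in>B. a i * i x)"
    and m: "\<And>j. j \<in> V0 \<Longrightarrow> anomaly_moment j s = (\<Sum>i\<in>B. a i * weighted_mass i j s)"
    and dm: "\<And>j. j \<in> V0 \<Longrightarrow> anomaly_flux j s = (\<Sum>i\<in>B. a i * flux_pairing i j s)"
    by (rule anomaly_lincomb[OF B s]) blast
  have B_V0: "j \<in> B \<Longrightarrow> j \<in> V0" for j using B fd_span_superset by blast
  have coercive_a: "\<delta> * (\<Sum>i\<in>B. \<bar>a i\<bar>) \<le> (\<Sum>j\<in>B. \<bar>anomaly_moment j s\<bar>)" using coercive[of a] m B_V0 by simp
  moreover have "\<bar>anomaly_flux j s\<bar> \<le> K * (\<Sum>i\<in>B. \<bar>a i\<bar>)" if "j \<in> B" for j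
  proof -
    have "\<bar>anomaly_flux j s\<bar> \<le> (\<Sum>i\<in>B. \<bar>a i\<bar> * K)"
      unfolding dm[OF B_V0[OF that]] using flux_bound that
      by (intro order.trans[OF sum_abs] sum_mono) (simp add: abs_mult mult_left_mono)
    then show ?thesis by (simp add: sum_distrib_left mult.commute)
  qed
  ultimately show "\<bar>\<Sum>j\<in>B. 2 * anomaly_moment j s * anomaly_flux j s\<bar> \<le> 2 * K * card B / \<delta> * anomaly_energy B s"
    unfolding anomaly_energy_def by (rule energy_derivative_estimate[OF B(1) assms(4,5)])
  assume "anomaly_energy B s = 0"
  then have "\<forall>j\<in>B. anomaly_moment j s = 0" unfolding anomaly_energy_def using B(1) by (simp add: sum_nonneg_eq_0_iff)
  then have "(\<Sum>i\<in>B. \<bar>a i\<bar>) = 0"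
    using coercive_a \<open>\<delta> > 0\<close> by (simp add: sum_nonneg order_antisym mult_le_0_iff)
  then show "q s x = c" using qa[of x] B(1) by (simp add: sum_nonneg_eq_0_iff)
qed

lemma weighted_mass_uniformly_coercive:
  assumes B: "finite B" "fd_span B = V0" "fd_independent B" and J: "compact J" "J \<subseteq> I"
  obtains \<delta> where "\<delta> > 0"
    "\<And>s \<kappa>. s \<in> J \<Longrightarrow> \<delta> * (\<Sum>i\<in>B. \<bar>\<kappa> i\<bar>) \<le> (\<Sum>j\<in>B. \<bar>\<Sum>i\<in>B. \<kappa> i * weighted_mass i j s\<bar>)"
proof -
  have "continuous_on J (weighted_mass i j)" if "i \<in> B" "j \<in> B" for i j
  proof -
    have "i \<in> V0" "j \<in> V0" using that B(1,2) fd_span_superset by blast+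
    then have ij: "bdd_meas M (\<lambda>x. i x * j x)" by (intro bdd_meas_mult V0_bdd)
    show ?thesis
      using continuous_on_subset[OF continuous_on_weighted_integral[OF ij] J(2)] unfolding weighted_mass_def
      by (simp add: mult.assoc)
  qed
  moreover have "\<forall>i\<in>B. \<kappa> i = 0"
    if "s \<in> J" "(\<Sum>j\<in>B. \<bar>\<Sum>i\<in>B. \<kappa> i * weighted_mass i j s\<bar>) = 0" for s \<kappa>
    using that J(2) by (intro weighted_mass_injective[OF B]) auto
  ultimately show ?thesis using uniform_lower_bound_injective_family[OF B(1) J(1)] that by blast
qed

lemma flux_pairing_bounded:
  assumes B: "finite B" "B \<subseteq> V0" and J: "compact J" "J \<subseteq> I"
  obtains K where "K \<ge> 0" "\<And>s i j. s \<in> J \<Longrightarrow> i \<in> B \<Longrightarrow> j \<in> B \<Longrightarrow> \<bar>flux_pairing i j s\<bar> \<le> K"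
proof -
  define h where "h s = (\<Sum>i\<in>B. \<Sum>j\<in>B. \<bar>flux_pairing i j s\<bar>)" for s
  have "continuous_on I (flux_pairing i j)" if "i \<in> B" "j \<in> B" for i j
  proof -
    have "i \<in> V0" "j \<in> V0" using that B(2) by auto
    then have ij: "bdd_meas M (\<lambda>x. i x *\<^sub>R grad j x)" by (intro bdd_meas_scaleR V0_bdd bdd_meas_grad)
    show ?thesis using continuous_on_flux_integral[OF ij] unfolding flux_pairing_def by simp
  qed
  then have "continuous_on J h"
    unfolding h_def using J(2) by (intro continuous_on_sum continuous_on_rabs) (auto intro: continuous_on_subset)
  then have "bounded (h ` J)" using J(1) by (intro compact_imp_bounded compact_continuous_image)
  then obtain K where K: "\<And>s. s \<in> J \<Longrightarrow> \<bar>h s\<bar> \<le> K" unfolding bounded_iff by auto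
  have "\<bar>flux_pairing i j s\<bar> \<le> K" if "s \<in> J" "i \<in> B" "j \<in> B" for s i j
  proof -
    have "\<bar>flux_pairing i j s\<bar> \<le> (\<Sum>j\<in>B. \<bar>flux_pairing i j s\<bar>)" using B(1) that by (intro member_le_sum) auto
    also have "\<dots> \<le> h s" unfolding h_def using B(1) that by (intro member_le_sum sum_nonneg) auto
    also have "\<dots> \<le> K" using K[OF that(1)] by simp
    finally show ?thesis .
  qed
  then show ?thesis using that[of "max K 0"] by (meson max.coboundedI1 max.cobounded2)
qed

lemma V0_independent_basis:
  obtains B where "finite B" "fd_span B = V0" "fd_independent B"
proof -
  obtain B0 where B0: "finite B0" "V0 = fd_span B0" using V0_fin unfolding finite_dim_fun_space_def by blast
  obtain B where "B \<subseteq> B0" "fd_span B = fd_span B0" "fd_independent B"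
    by (rule fd_span_independent_subset[OF B0(1)])
  moreover from this(1) have "finite B" using B0(1) by (rule finite_subset)
  ultimately show ?thesis using B0(2) that by simp
qed

lemma anomaly_energy_at_0: "anomaly_energy B 0 = 0"
  using q0 by (simp add: anomaly_energy_def anomaly_moment_def)

lemma pv_constant:
  assumes T: "T \<in> I" shows "q T x = c"
proof -
  obtain B where B: "finite B" "fd_span B = V0" "fd_independent B" by (rule V0_independent_basis)
  have B_V0: "B \<subseteq> V0" using fd_span_superset[OF B(1)] unfolding B(2) by blast
  define J where "J = {min 0 T..max 0 T}"
  have mi: "min 0 T \<in> I" "max 0 T \<in> I" using T zero_I by (simp_all add: min_def max_def)
  then have J: "compact J" "J \<subseteq> I" unfolding J_def using mem_is_interval_1_I[OF I_int mi] by auto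
  obtain \<delta> where \<delta>: "\<delta> > 0"
    "\<And>s \<kappa>. s \<in> J \<Longrightarrow> \<delta> * (\<Sum>i\<in>B. \<bar>\<kappa> i\<bar>) \<le> (\<Sum>j\<in>B. \<bar>\<Sum>i\<in>B. \<kappa> i * weighted_mass i j s\<bar>)"
    using weighted_mass_uniformly_coercive[OF B J] by blast
  obtain K where K: "K \<ge> 0" "\<And>s i j. s \<in> J \<Longrightarrow> i \<in> B \<Longrightarrow> j \<in> B \<Longrightarrow> \<bar>flux_pairing i j s\<bar> \<le> K"
    using flux_pairing_bounded[OF B(1) B_V0 J] by blast
  define E' where "E' s = (\<Sum>j\<in>B. 2 * anomaly_moment j s * anomaly_flux j s)" for s
  have deriv: "(anomaly_energy B has_real_derivative E' s) (at s within I)" if "s \<in> I" for s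
    unfolding E'_def using B_V0 that by (rule anomaly_energy_deriv)
  have "continuous_on I (anomaly_energy B)"
    unfolding continuous_on_eq_continuous_within using deriv DERIV_continuous by blast
  then have cont_E: "continuous_on {min 0 T..max 0 T} (anomaly_energy B)"
    using J(2) unfolding J_def by (rule continuous_on_subset)
  have "anomaly_energy B T = 0"
  proof (rule gronwall_vanishing[OF cont_E])
    fix s assume s: "min 0 T < s" "s < max 0 T"
    then have "s \<in> J" unfolding J_def by simp
    have "{min 0 T<..<max 0 T} \<subseteq> interior I" using J(2) unfolding J_def by (intro interior_maximal) auto
    then have s_int: "s \<in> interior I" using s by auto
    then have "s \<in> I" using interior_subset by blast
    from deriv[OF this] show "(anomaly_energy B has_real_derivative E' s) (at s)"
      unfolding at_within_interior[OF s_int] .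
    show "\<bar>E' s\<bar> \<le> 2 * K * card B / \<delta> * anomaly_energy B s"
      unfolding E'_def using \<open>s \<in> J\<close> J(2)
      by (intro anomaly_energy_estimate(1)[OF B(1,2) _ \<delta>(1) K(1) \<delta>(2)[OF \<open>s \<in> J\<close>] K(2)[OF \<open>s \<in> J\<close>]]) auto
  qed (use anomaly_energy_at_0[of B] in \<open>simp_all add: anomaly_energy_def sum_nonneg\<close>)
  moreover have "T \<in> J" unfolding J_def by simp
  ultimately show ?thesis
    using anomaly_energy_estimate(2)[OF B(1,2) T \<delta>(1) K(1) \<delta>(2) K(2)] by blast
qed

end

theorem mainTheorem5:
  fixes M :: "'p::topological_space measure"
    and khat :: "'p \<Rightarrow> real^3" and E :: "'p set set"
    and grad :: "('p \<Rightarrow> real) \<Rightarrow> ('p \<Rightarrow> real^3)" and sdiv :: "('p \<Rightarrow> real^3) \<Rightarrow> ('p \<Rightarrow> real)"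
    and V0 :: "('p \<Rightarrow> real) set" and V1 :: "('p \<Rightarrow> real^3) set" and V2 :: "('p \<Rightarrow> real) set"
    and g :: real and f b :: "'p \<Rightarrow> real" and I :: "real set"
    and u F :: "real \<Rightarrow> 'p \<Rightarrow> real^3" and D \<zeta> q :: "real \<Rightarrow> 'p \<Rightarrow> real" and c :: real
  assumes setting: "primal_setting M khat E grad sdiv V0 V1 V2"
    and g_pos: "g > 0"
    and f_Linf: "bdd_meas M f"
    and b_V2: "b \<in> V2"
    and I_int: "is_interval I" and zero_I: "0 \<in> I"
    and u_V1: "\<forall>t\<in>I. u t \<in> V1" and D_V2: "\<forall>t\<in>I. D t \<in> V2"
    and u_C1: "weak_C1 M I V1 u" and D_C1: "weak_C1 M I V2 D"
    and F_V1: "\<forall>t\<in>I. F t \<in> V1" and F_cont: "weak_cont M I V1 F"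
    and D_pos: "\<forall>t\<in>I. \<forall>x. D t x > 0"
    and vort: "\<forall>t\<in>I. \<zeta> t \<in> V0 \<and>
        (\<forall>\<gamma>\<in>V0. (LINT x|M. \<gamma> x * \<zeta> t x) = - (LINT x|M. perp khat (grad \<gamma>) x \<bullet> u t x))"
    and pv: "\<forall>t\<in>I. q t \<in> V0 \<and>
        (\<forall>\<gamma>\<in>V0. (LINT x|M. \<gamma> x * q t x * D t x) = (LINT x|M. \<gamma> x * (\<zeta> t x + f x)))"
    and mom: "\<forall>t\<in>I. \<forall>w\<in>V1.
        ((\<lambda>s. LINT x|M. w x \<bullet> u s x) has_real_derivative
          (- (LINT x|M. w x \<bullet> perp khat (\<lambda>y. q t y *\<^sub>R F t y) x)
           + (LINT x|M. sdiv w x * (g * (D t x + b x) + (1/2) * (norm (u t x))\<^sup>2)))) (at t within I)"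
    and cont: "\<forall>t\<in>I. \<forall>\<phi>\<in>V2.
        ((\<lambda>s. LINT x|M. \<phi> x * D s x) has_real_derivative
          (- (LINT x|M. \<phi> x * sdiv (F t) x))) (at t within I)"
    and q0: "\<forall>x. q 0 x = c"
  shows "\<forall>t\<in>I. \<forall>x. q t x = c"
proof -
  interpret pv_evolution M khat E grad sdiv V0 V1 V2 g f b I u F D \<zeta> q c
    using setting f_Linf I_int zero_I D_V2 F_V1 F_cont D_pos vort pv mom cont q0
    by unfold_locales
  show ?thesis using pv_constant by blast
qed

end
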